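(* Let $G$ be a graph with a length-function $\ell$ and let $T\subseteq G$ be a tree. If $T$ is $2$-geodesic in $G$, then $T$ is fully geodesic in $G$.
   Context: All graphs are finite; parallel edges are allowed, loops are not. A length-function on a graph $G$ is a map $\ell:E(G)\to\mathbb{R}^+$ (strictly positive reals); for a subgraph $H$ put $\ell(H)=\sum_{e\in E(H)}\ell(e)$, and subgraphs carry the restricted length-function. For $A\subseteq V(G)$, the Steiner distance $\mathrm{sd}_G(A)$ is the minimum of $\ell(S)$ over all connected subgraphs $S\subseteq G$ with $A\subseteq V(S)$ ($\infty$ if none exists). A subgraph $H\subseteq G$ is $k$-geodesic in $G$ if $\mathrm{sd}_H(A)=\mathrm{sd}_G(A)$ for every $A\subseteq V(H)$ with $|A|\le k$; it is fully geodesic in $G$ if it is $k$-geodesic for every $k\in\mathbb{N}$. *)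

theory Defs
  imports Main "HOL-Library.Extended_Real"
begin

text \<open>A finite multigraph (parallel edges allowed, no loops) is given by a vertex set V,
an edge set E and an incidence map ends assigning to each edge its two distinct endpoints.\<close>

definition multigraph :: "'v set \<Rightarrow> 'e set \<Rightarrow> ('e \<Rightarrow> 'v set) \<Rightarrow> bool" where
  "multigraph V E ends \<longleftrightarrow> finite V \<and> finite E \<and>
     (\<forall>e\<in>E. ends e \<subseteq> V \<and> card (ends e) = 2)"

definition length_function :: "'e set \<Rightarrow> ('e \<Rightarrow> real) \<Rightarrow> bool" where
  "length_function E l \<longleftrightarrow> (\<forall>e\<in>E. l e > 0)"

definition subgraph :: "'v set \<Rightarrow> 'e set \<Rightarrow> 'v set \<Rightarrow> 'e set \<Rightarrow> ('e \<Rightarrow> 'v set) \<Rightarrow> bool" where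
  "subgraph VH EH V E ends \<longleftrightarrow> VH \<subseteq> V \<and> EH \<subseteq> E \<and> (\<forall>e\<in>EH. ends e \<subseteq> VH)"

definition adj :: "'e set \<Rightarrow> ('e \<Rightarrow> 'v set) \<Rightarrow> ('v \<times> 'v) set" where
  "adj E ends = {(u, v). \<exists>e\<in>E. ends e = {u, v}}"

definition connected_graph :: "'v set \<Rightarrow> 'e set \<Rightarrow> ('e \<Rightarrow> 'v set) \<Rightarrow> bool" where
  "connected_graph V E ends \<longleftrightarrow> V \<noteq> {} \<and> (\<forall>u\<in>V. \<forall>v\<in>V. (u, v) \<in> (adj E ends)\<^sup>*)"

text \<open>A cycle: k \<ge> 2 distinct vertices and k distinct edges, edge i joining vertex i and i+1 (mod k).
  For k = 2 this is a pair of parallel edges.\<close>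
definition has_cycle :: "'v set \<Rightarrow> 'e set \<Rightarrow> ('e \<Rightarrow> 'v set) \<Rightarrow> bool" where
  "has_cycle V E ends \<longleftrightarrow> (\<exists>vs es. length vs = length es \<and> length vs \<ge> 2 \<and>
      distinct vs \<and> distinct es \<and> set vs \<subseteq> V \<and> set es \<subseteq> E \<and>
      (\<forall>i < length vs. ends (es ! i) = {vs ! i, vs ! ((i + 1) mod length vs)}))"

definition is_tree :: "'v set \<Rightarrow> 'e set \<Rightarrow> ('e \<Rightarrow> 'v set) \<Rightarrow> bool" where
  "is_tree V E ends \<longleftrightarrow> connected_graph V E ends \<and> \<not> has_cycle V E ends"

text \<open>Steiner distance of A in the graph (V,E): infimum of l(S) over connected subgraphs S
  containing A; \<infinity> if there is none.\<close>
definition steiner_dist :: "'v set \<Rightarrow> 'e set \<Rightarrow> ('e \<Rightarrow> 'v set) \<Rightarrow> ('e \<Rightarrow> real) \<Rightarrow> 'v set \<Rightarrow> ereal" where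
  "steiner_dist V E ends l A =
     Inf {ereal (sum l ES) | VS ES. subgraph VS ES V E ends \<and> connected_graph VS ES ends \<and> A \<subseteq> VS}"

definition k_geodesic :: "nat \<Rightarrow> 'v set \<Rightarrow> 'e set \<Rightarrow> 'v set \<Rightarrow> 'e set \<Rightarrow> ('e \<Rightarrow> 'v set) \<Rightarrow> ('e \<Rightarrow> real) \<Rightarrow> bool" where
  "k_geodesic k VH EH V E ends l \<longleftrightarrow>
     (\<forall>A. A \<subseteq> VH \<and> card A \<le> k \<longrightarrow> steiner_dist VH EH ends l A = steiner_dist V E ends l A)"

definition fully_geodesic :: "'v set \<Rightarrow> 'e set \<Rightarrow> 'v set \<Rightarrow> 'e set \<Rightarrow> ('e \<Rightarrow> 'v set) \<Rightarrow> ('e \<Rightarrow> real) \<Rightarrow> bool" where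
  "fully_geodesic VH EH V E ends l \<longleftrightarrow> (\<forall>k. k_geodesic k VH EH V E ends l)"

end

theory Submission
  imports Defs
begin

text \<open>Let \<open>S\<close> be a connected subgraph of \<open>G\<close> containing \<open>A \<subseteq> V(T)\<close>. Doubling the edges of \<open>S\<close>
  gives a closed walk through all vertices of \<open>S\<close> whose steps, measured by the pairwise Steiner
  distance of \<open>G\<close>, cost at most \<open>2 \<ell>(S)\<close>. Skipping the vertices outside \<open>T\<close> does not increase
  this cost (triangle inequality), and on vertices of \<open>T\<close> pairwise distances in \<open>G\<close> and \<open>T\<close> agree.
  In the tree \<open>T\<close>, the distance of \<open>a\<close> and \<open>b\<close> is at least the length of the edges separating them,
  a closed walk through \<open>A\<close> crosses every edge separating \<open>A\<close> at least twice, and the Steiner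
  distance of \<open>A\<close> is at most the total length of the edges separating \<open>A\<close>. Hence
  \<open>2 sd\<^sub>T(A) \<le> 2 \<ell>(S)\<close>.\<close>

section \<open>Connectivity and bridges\<close>

lemma sym_adj: "sym (adj F ends)"
  unfolding adj_def sym_def by (auto simp: insert_commute)

lemma adj_rtrancl_sym: "(x, y) \<in> (adj F ends)\<^sup>* \<Longrightarrow> (y, x) \<in> (adj F ends)\<^sup>*"
  using symD[OF sym_rtrancl[OF sym_adj[of F ends]]] by blast

lemma adj_mono: "F \<subseteq> F' \<Longrightarrow> adj F ends \<subseteq> adj F' ends"
  unfolding adj_def by auto

lemma adj_rtrancl_mono: "F \<subseteq> F' \<Longrightarrow> (x, y) \<in> (adj F ends)\<^sup>* \<Longrightarrow> (x, y) \<in> (adj F' ends)\<^sup>*"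
  using rtrancl_mono[OF adj_mono] by blast

lemma adj_rtrancl_Diff_edge:
  assumes "(u, x) \<in> (adj F ends)\<^sup>*" and "ends e = {u, w}"
  shows "(u, x) \<in> (adj (F - {e}) ends)\<^sup>* \<or> (w, x) \<in> (adj (F - {e}) ends)\<^sup>*"
  using assms(1)
proof (induction rule: rtrancl_induct)
  case base
  then show ?case by simp
next
  case (step y z)
  then obtain f where f: "f \<in> F" "ends f = {y, z}"
    unfolding adj_def by auto
  show ?case
  proof (cases "f = e")
    case True
    then have "z = u \<or> z = w"
      using f assms(2) by (auto simp: doubleton_eq_iff)
    then show ?thesis by (metis rtrancl.rtrancl_refl)
  next
    case False
    then have "(y, z) \<in> adj (F - {e}) ends"
      using f unfolding adj_def by auto
    then show ?thesis
      using step.IH by (meson rtrancl.rtrancl_into_rtrancl)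
  qed
qed

lemma subgraph_trans:
  "subgraph V1 E1 V2 E2 ends \<Longrightarrow> subgraph V2 E2 V3 E3 ends \<Longrightarrow> subgraph V1 E1 V3 E3 ends"
  unfolding subgraph_def by blast

lemma connected_graph_singleton: "connected_graph {v} {} ends"
  unfolding connected_graph_def by auto

lemma connected_graph_edge:
  assumes "ends e = {u, w}"
  shows "connected_graph {u, w} {e} ends"
proof -
  have "(u, w) \<in> adj {e} ends" "(w, u) \<in> adj {e} ends"
    using assms unfolding adj_def by auto
  then show ?thesis
    unfolding connected_graph_def by auto
qed

lemma connected_graph_Un:
  assumes "connected_graph V1 E1 ends" "connected_graph V2 E2 ends" "b \<in> V1" "b \<in> V2"
  shows "connected_graph (V1 \<union> V2) (E1 \<union> E2) ends"
proof -
  have r1: "(x, y) \<in> (adj (E1 \<union> E2) ends)\<^sup>*" if "x \<in> V1" "y \<in> V1" for x y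
    using assms(1) that unfolding connected_graph_def by (auto intro: adj_rtrancl_mono[of E1])
  have r2: "(x, y) \<in> (adj (E1 \<union> E2) ends)\<^sup>*" if "x \<in> V2" "y \<in> V2" for x y
    using assms(2) that unfolding connected_graph_def by (auto intro: adj_rtrancl_mono[of E2])
  show ?thesis
    unfolding connected_graph_def
  proof (intro conjI ballI)
    show "V1 \<union> V2 \<noteq> {}"
      using assms(3) by auto
  next
    fix x y
    assume "x \<in> V1 \<union> V2" "y \<in> V1 \<union> V2"
    then show "(x, y) \<in> (adj (E1 \<union> E2) ends)\<^sup>*"
      using r1[of x b] r1[of b y] r2[of x b] r2[of b y] r1[of x y] r2[of x y] assms(3,4)
      by (meson UnE rtrancl_trans)
  qed
qed

lemma connected_graph_component:
  assumes "\<forall>f\<in>F. ends f \<subseteq> VS" and "u \<in> VS"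
  defines "C \<equiv> {x \<in> VS. (u, x) \<in> (adj F ends)\<^sup>*}"
  shows "connected_graph C {f \<in> F. ends f \<subseteq> C} ends"
proof -
  have reach: "(u, x) \<in> (adj {f \<in> F. ends f \<subseteq> C} ends)\<^sup>*" if "(u, x) \<in> (adj F ends)\<^sup>*" for x
    using that
  proof (induction rule: rtrancl_induct)
    case base
    then show ?case by simp
  next
    case (step y z)
    then obtain f where f: "f \<in> F" "ends f = {y, z}"
      unfolding adj_def by auto
    then have "ends f \<subseteq> C"
      using assms(1) step(1,2) unfolding C_def by auto
    then have "(y, z) \<in> adj {f \<in> F. ends f \<subseteq> C} ends"
      using f unfolding adj_def by auto
    then show ?case
      using step.IH by (meson rtrancl.rtrancl_into_rtrancl)
  qed
  have "u \<in> C"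
    using assms(2) unfolding C_def by auto
  moreover have "(x, y) \<in> (adj {f \<in> F. ends f \<subseteq> C} ends)\<^sup>*" if "x \<in> C" "y \<in> C" for x y
    using reach[of x] reach[of y] that unfolding C_def by (auto intro: rtrancl_trans adj_rtrancl_sym)
  ultimately show ?thesis
    unfolding connected_graph_def by auto
qed

lemma connected_graph_Diff_edge:
  assumes conn: "connected_graph VS F ends" and e: "ends e = {u, w}" "u \<in> VS"
    and linked: "(u, w) \<in> (adj (F - {e}) ends)\<^sup>*"
  shows "connected_graph VS (F - {e}) ends"
proof -
  have reach: "(u, z) \<in> (adj (F - {e}) ends)\<^sup>*" if "z \<in> VS" for z
  proof -
    have "(u, z) \<in> (adj F ends)\<^sup>*"
      using conn e(2) that unfolding connected_graph_def by auto
    then show ?thesis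
      using adj_rtrancl_Diff_edge[of u z F ends e w] e(1) linked by (meson rtrancl_trans)
  qed
  have "(x, y) \<in> (adj (F - {e}) ends)\<^sup>*" if "x \<in> VS" "y \<in> VS" for x y
    using adj_rtrancl_sym[OF reach[OF that(1)]] reach[OF that(2)] by (rule rtrancl_trans)
  then show ?thesis
    using conn unfolding connected_graph_def by blast
qed

lemma bridge_split:
  assumes ends: "\<forall>f\<in>F. ends f \<subseteq> VS \<and> ends f \<noteq> {}" and conn: "connected_graph VS F ends"
    and r: "r \<in> VS" and e: "e \<in> F" "ends e = {u, w}"
    and bridge: "(u, w) \<notin> (adj (F - {e}) ends)\<^sup>*"
  obtains V1 E1 V2 E2 x y where
    "subgraph V1 E1 VS (F - {e}) ends" "connected_graph V1 E1 ends"
    "subgraph V2 E2 VS (F - {e}) ends" "connected_graph V2 E2 ends"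
    "E1 \<inter> E2 = {}" "V1 \<union> V2 = VS" "r \<in> V1" "x \<in> V1" "y \<in> V2" "ends e = {x, y}"
proof -
  define C where "C z = {x \<in> VS. (z, x) \<in> (adj (F - {e}) ends)\<^sup>*}" for z
  define EC where "EC z = {f \<in> F - {e}. ends f \<subseteq> C z}" for z
  have uw: "u \<in> VS" "w \<in> VS"
    using ends e by auto
  have comp: "subgraph (C z) (EC z) VS (F - {e}) ends \<and> connected_graph (C z) (EC z) ends \<and> z \<in> C z"
    if "z \<in> VS" for z
    using connected_graph_component[of "F - {e}" ends VS z] ends that
    unfolding subgraph_def C_def EC_def by auto
  have disj: "C u \<inter> C w = {}"
    using bridge unfolding C_def by (auto intro: rtrancl_trans adj_rtrancl_sym)
  then have edisj: "EC u \<inter> EC w = {}"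
    using ends unfolding EC_def by blast
  have cover: "C u \<union> C w = VS"
  proof
    show "VS \<subseteq> C u \<union> C w"
    proof
      fix x
      assume "x \<in> VS"
      moreover have "(u, x) \<in> (adj F ends)\<^sup>*"
        using conn uw \<open>x \<in> VS\<close> unfolding connected_graph_def by auto
      ultimately show "x \<in> C u \<union> C w"
        using adj_rtrancl_Diff_edge[of u x F ends e w] e(2) unfolding C_def by blast
    qed
  qed (auto simp: C_def)
  show thesis
  proof (cases "r \<in> C u")
    case True
    then show thesis
      using that[of "C u" "EC u" "C w" "EC w" u w] comp uw edisj cover e(2) by blast
  next
    case False
    then show thesis
      using that[of "C w" "EC w" "C u" "EC u" w u] comp uw edisj cover e(2) r
      by (auto simp: insert_commute Int_commute Un_commute)
  qed
qed

section \<open>Steiner distance\<close>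

lemma steiner_dist_le:
  "subgraph VS ES V E ends \<Longrightarrow> connected_graph VS ES ends \<Longrightarrow> A \<subseteq> VS \<Longrightarrow>
    steiner_dist V E ends l A \<le> ereal (sum l ES)"
  unfolding steiner_dist_def by (rule Inf_lower) blast

lemma steiner_dist_greatest:
  "(\<And>VS ES. subgraph VS ES V E ends \<Longrightarrow> connected_graph VS ES ends \<Longrightarrow> A \<subseteq> VS \<Longrightarrow>
      x \<le> ereal (sum l ES)) \<Longrightarrow> x \<le> steiner_dist V E ends l A"
  unfolding steiner_dist_def by (rule Inf_greatest) blast

lemma steiner_dist_nonneg:
  assumes "\<forall>e\<in>E. 0 \<le> l e"
  shows "0 \<le> steiner_dist V E ends l A"
proof (rule steiner_dist_greatest)
  fix VS ES
  assume "subgraph VS ES V E ends"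
  then show "0 \<le> ereal (sum l ES)"
    using assms unfolding subgraph_def by (auto intro: sum_nonneg)
qed

lemma steiner_dist_eq_infinity:
  assumes "\<nexists>VS ES. subgraph VS ES V E ends \<and> connected_graph VS ES ends \<and> A \<subseteq> VS"
  shows "steiner_dist V E ends l A = \<infinity>"
proof -
  have "{ereal (sum l ES) | VS ES. subgraph VS ES V E ends \<and> connected_graph VS ES ends \<and> A \<subseteq> VS} = {}"
    using assms by auto
  then show ?thesis
    unfolding steiner_dist_def by (metis Inf_empty top_ereal_def)
qed

lemma steiner_dist_attained:
  assumes "finite V" "finite E"
    and "subgraph VS ES V E ends" "connected_graph VS ES ends" "A \<subseteq> VS"
  obtains VS' ES' where "subgraph VS' ES' V E ends" "connected_graph VS' ES' ends" "A \<subseteq> VS'"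
    "steiner_dist V E ends l A = ereal (sum l ES')"
proof -
  define X where
    "X = {ereal (sum l ES) | VS ES. subgraph VS ES V E ends \<and> connected_graph VS ES ends \<and> A \<subseteq> VS}"
  have "X \<subseteq> (\<lambda>(VS, ES). ereal (sum l ES)) ` (Pow V \<times> Pow E)"
    unfolding X_def subgraph_def by auto
  then have "finite X"
    using assms(1,2) by (auto intro: finite_subset)
  moreover have "X \<noteq> {}"
    using assms(3-5) unfolding X_def by blast
  ultimately have "Inf X \<in> X"
    using Min_Inf Min_in by metis
  then show thesis
    using that unfolding X_def steiner_dist_def by auto
qed

lemma steiner_dist_triangle:
  assumes "finite V" "finite E" "\<forall>e\<in>E. 0 \<le> l e"
  shows "steiner_dist V E ends l {a, c} \<le> steiner_dist V E ends l {a, b} + steiner_dist V E ends l {b, c}"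
proof (cases "\<exists>VS ES. subgraph VS ES V E ends \<and> connected_graph VS ES ends \<and> {a, b} \<subseteq> VS
    \<and> (\<exists>VS ES. subgraph VS ES V E ends \<and> connected_graph VS ES ends \<and> {b, c} \<subseteq> VS)")
  case False
  then show ?thesis
    using steiner_dist_eq_infinity steiner_dist_nonneg[OF assms(3)] by (metis ereal_less_eq(1) ereal_plus_eq_PInfty)
next
  case True
  then obtain V1 E1 V2 E2 where
      1: "subgraph V1 E1 V E ends" "connected_graph V1 E1 ends" "{a, b} \<subseteq> V1"
        "steiner_dist V E ends l {a, b} = ereal (sum l E1)"
    and 2: "subgraph V2 E2 V E ends" "connected_graph V2 E2 ends" "{b, c} \<subseteq> V2"
        "steiner_dist V E ends l {b, c} = ereal (sum l E2)"
    using steiner_dist_attained[OF assms(1,2)] by metis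
  have "subgraph (V1 \<union> V2) (E1 \<union> E2) V E ends"
    using 1(1) 2(1) unfolding subgraph_def by auto
  moreover have "connected_graph (V1 \<union> V2) (E1 \<union> E2) ends"
    using connected_graph_Un[OF 1(2) 2(2)] 1(3) 2(3) by auto
  ultimately have "steiner_dist V E ends l {a, c} \<le> ereal (sum l (E1 \<union> E2))"
    using 1(3) 2(3) by (intro steiner_dist_le) auto
  also have "sum l (E1 \<union> E2) \<le> sum l E1 + sum l E2"
  proof -
    have "finite E1" "finite E2" "E1 \<subseteq> E"
      using 1(1) 2(1) assms(2) unfolding subgraph_def by (auto intro: finite_subset)
    moreover have "0 \<le> sum l (E1 \<inter> E2)"
      using \<open>E1 \<subseteq> E\<close> assms(3) by (auto intro: sum_nonneg)
    ultimately show ?thesis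
      by (simp add: sum_Un)
  qed
  finally show ?thesis
    using 1(4) 2(4) by simp
qed

lemma steiner_dist_subgraph:
  assumes "subgraph VH EH V E ends"
  shows "steiner_dist V E ends l A \<le> steiner_dist VH EH ends l A"
proof (rule steiner_dist_greatest)
  fix VS ES
  assume "subgraph VS ES VH EH ends" "connected_graph VS ES ends" "A \<subseteq> VS"
  then show "steiner_dist V E ends l A \<le> ereal (sum l ES)"
    using subgraph_trans[OF _ assms] steiner_dist_le by blast
qed

definition separating_edges :: "'e set \<Rightarrow> ('e \<Rightarrow> 'v set) \<Rightarrow> 'v set \<Rightarrow> 'e set" where
  "separating_edges F ends A = {e \<in> F. \<exists>a\<in>A. \<exists>b\<in>A. (a, b) \<notin> (adj (F - {e}) ends)\<^sup>*}"

lemma separating_edges_subset_connected_subgraph: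
  assumes "subgraph VS ES V E ends" "connected_graph VS ES ends" "A \<subseteq> VS"
  shows "separating_edges E ends A \<subseteq> ES"
proof
  fix e
  assume "e \<in> separating_edges E ends A"
  then obtain a b where ab: "a \<in> A" "b \<in> A" "(a, b) \<notin> (adj (E - {e}) ends)\<^sup>*"
    unfolding separating_edges_def by blast
  show "e \<in> ES"
  proof (rule ccontr)
    assume "e \<notin> ES"
    then have "ES \<subseteq> E - {e}"
      using assms(1) unfolding subgraph_def by auto
    moreover have "(a, b) \<in> (adj ES ends)\<^sup>*"
      using assms(2,3) ab(1,2) unfolding connected_graph_def by auto
    ultimately have "(a, b) \<in> (adj (E - {e}) ends)\<^sup>*"
      by (rule adj_rtrancl_mono)
    then show False
      using ab(3) by contradiction
  qed
qed

lemma steiner_dist_ge_separating_edges: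
  assumes "finite E" "\<forall>e\<in>E. 0 \<le> l e"
  shows "ereal (sum l (separating_edges E ends A)) \<le> steiner_dist V E ends l A"
proof (rule steiner_dist_greatest)
  fix VS ES
  assume S: "subgraph VS ES V E ends" "connected_graph VS ES ends" "A \<subseteq> VS"
  then have "ES \<subseteq> E"
    unfolding subgraph_def by blast
  have "sum l (separating_edges E ends A) \<le> sum l ES"
  proof (rule sum_mono2)
    show "finite ES"
      using \<open>ES \<subseteq> E\<close> assms(1) by (rule finite_subset)
    show "separating_edges E ends A \<subseteq> ES"
      using S by (rule separating_edges_subset_connected_subgraph)
    show "\<And>e. e \<in> ES - separating_edges E ends A \<Longrightarrow> 0 \<le> l e"
      using \<open>ES \<subseteq> E\<close> assms(2) by blast
  qed
  then show "ereal (sum l (separating_edges E ends A)) \<le> ereal (sum l ES)"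
    by simp
qed

section \<open>Closed walks\<close>

fun walk_cost :: "('v \<Rightarrow> 'v \<Rightarrow> ereal) \<Rightarrow> 'v list \<Rightarrow> ereal" where
  "walk_cost D (a # b # xs) = D a b + walk_cost D (b # xs)"
| "walk_cost D _ = 0"

lemma walk_cost_append: "walk_cost D (xs @ y # ys) = walk_cost D (xs @ [y]) + walk_cost D (y # ys)"
proof (induction xs)
  case (Cons a xs)
  then show ?case by (cases xs) (auto simp: add.assoc)
qed simp

lemma walk_cost_snoc: "xs \<noteq> [] \<Longrightarrow> walk_cost D (xs @ [y]) = walk_cost D xs + D (last xs) y"
proof (induction xs)
  case (Cons a xs)
  then show ?case by (cases xs) (auto simp: add.assoc)
qed simp

lemma walk_cost_cong:
  "(\<And>a b. a \<in> set xs \<Longrightarrow> b \<in> set xs \<Longrightarrow> D a b = D' a b) \<Longrightarrow> walk_cost D xs = walk_cost D' xs"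
  by (induction D xs rule: walk_cost.induct) auto

lemma walk_cost_filter_le:
  assumes triangle: "\<And>a b c. D a c \<le> D a b + D b c"
  shows "P a \<Longrightarrow> P (last (a # ys)) \<Longrightarrow> walk_cost D (filter P (a # ys)) \<le> walk_cost D (a # ys)"
proof (induction "length ys" arbitrary: a ys rule: less_induct)
  case less
  show ?case
  proof (cases ys)
    case Nil
    then show ?thesis by simp
  next
    case (Cons b rest)
    show ?thesis
    proof (cases "P b")
      case True
      have "walk_cost D (filter P (b # rest)) \<le> walk_cost D (b # rest)"
        using less(1)[of rest b] True less(3) Cons by auto
      then show ?thesis
        using Cons less(2) True by (simp add: add_left_mono)
    next
      case False
      then obtain c rest' where rest: "rest = c # rest'"
        using less(3) Cons by (cases rest) auto
      have "walk_cost D (filter P (a # rest)) \<le> walk_cost D (a # rest)"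
        using less(1)[of rest a] less(2,3) Cons rest by auto
      also have "\<dots> = D a c + walk_cost D (c # rest')"
        using rest by simp
      also have "\<dots> \<le> D a b + D b c + walk_cost D (c # rest')"
        using triangle[of a c b] by (simp add: add_right_mono)
      also have "\<dots> = walk_cost D (a # ys)"
        using Cons rest by (simp add: add.assoc)
      finally show ?thesis
        using Cons False less(2) by simp
    qed
  qed
qed

lemma last_filter: "xs \<noteq> [] \<Longrightarrow> P (last xs) \<Longrightarrow> last (filter P xs) = last xs"
  by (induction xs) (auto simp: filter_empty_conv)

text \<open>The detour \<open>a, ys2, a\<close> is inserted at an occurrence of \<open>a\<close> in \<open>ys1\<close>.\<close>

lemma walk_cost_splice:
  assumes "a \<in> set ys1" "ys2 \<noteq> []" "hd ys2 = b" "last ys2 = b"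
  obtains ys where "hd ys = hd ys1" "last ys = last ys1" "set ys = set ys1 \<union> set ys2"
    "walk_cost D ys = walk_cost D ys1 + walk_cost D ys2 + D a b + D b a"
proof -
  obtain p q where pq: "ys1 = p @ a # q"
    using assms(1) by (meson split_list)
  obtain t where t: "ys2 = b # t"
    using assms(2,3) by (cases ys2) auto
  define ys where "ys = p @ a # ys2 @ a # q"
  have "walk_cost D ys = walk_cost D (p @ [a]) + walk_cost D (a # ys2 @ a # q)"
    unfolding ys_def by (rule walk_cost_append)
  also have "walk_cost D (a # ys2 @ a # q) = D a b + (walk_cost D (ys2 @ [a]) + walk_cost D (a # q))"
    using walk_cost_append[of D ys2 a q] t by simp
  also have "walk_cost D (ys2 @ [a]) = walk_cost D ys2 + D b a"
    using walk_cost_snoc[OF assms(2), of D a] assms(4) by simp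
  finally have "walk_cost D ys = walk_cost D ys1 + walk_cost D ys2 + D a b + D b a"
    using walk_cost_append[of D p a q] pq by (simp add: ac_simps)
  moreover have "hd ys = hd ys1"
    using pq unfolding ys_def by (cases p) auto
  moreover have "last ys = last ys1"
    using pq unfolding ys_def by (cases q) auto
  moreover have "set ys = set ys1 \<union> set ys2"
    using pq unfolding ys_def by auto
  ultimately show thesis
    using that by blast
qed

abbreviation pair_dist :: "'v set \<Rightarrow> 'e set \<Rightarrow> ('e \<Rightarrow> 'v set) \<Rightarrow> ('e \<Rightarrow> real) \<Rightarrow> 'v \<Rightarrow> 'v \<Rightarrow> ereal" where
  "pair_dist V E ends l a b \<equiv> steiner_dist V E ends l {a, b}"

lemma pair_dist_le_edge:
  assumes "e \<in> E" "ends e = {x, y}" "ends e \<subseteq> V"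
  shows "pair_dist V E ends l x y \<le> ereal (l e)"
proof -
  have "subgraph {x, y} {e} V E ends"
    using assms unfolding subgraph_def by simp
  then show ?thesis
    using connected_graph_edge[of ends e x y, OF assms(2)] steiner_dist_le by fastforce
qed

lemma sum_disjoint_subsets_le:
  fixes f :: "'a \<Rightarrow> real"
  assumes "finite A" "a \<in> A" "B \<subseteq> A - {a}" "C \<subseteq> A - {a}" "B \<inter> C = {}" "\<forall>x\<in>A. 0 \<le> f x"
  shows "sum f B + sum f C + f a \<le> sum f A"
proof -
  have "sum f B + sum f C = sum f (B \<union> C)"
    using assms(1,3-5) by (simp add: finite_subset sum.union_disjoint)
  also have "\<dots> \<le> sum f (A - {a})"
    using assms by (intro sum_mono2) auto
  finally show ?thesis
    using assms(1,2) by (simp add: sum.remove)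
qed

text \<open>Induction on the number of edges: a non-bridge is simply dropped; at a bridge the closed walks
  of the two sides are spliced together, traversing the bridge once in each direction.\<close>

lemma connected_subgraph_closed_walk:
  assumes mg: "multigraph V E ends" and nn: "\<forall>e\<in>E. 0 \<le> l e"
  shows "subgraph VS ES V E ends \<Longrightarrow> connected_graph VS ES ends \<Longrightarrow> r \<in> VS \<Longrightarrow>
    \<exists>ys. ys \<noteq> [] \<and> hd ys = r \<and> last ys = r \<and> set ys = VS \<and>
      walk_cost (pair_dist V E ends l) ys \<le> ereal (2 * sum l ES)"
proof (induction "card ES" arbitrary: VS ES r rule: less_induct)
  case less
  let ?D = "pair_dist V E ends l"
  have ES: "ES \<subseteq> E" "finite ES" "\<forall>f\<in>ES. ends f \<subseteq> VS \<and> ends f \<noteq> {}"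
    using less(2) mg unfolding subgraph_def multigraph_def by (auto intro: finite_subset, force)
  show ?case
  proof (cases "ES = {}")
    case True
    then have "VS = {r}"
      using less(3,4) unfolding connected_graph_def adj_def by auto
    then show ?thesis
      using True by (intro exI[of _ "[r]"]) auto
  next
    case False
    then obtain e where e: "e \<in> ES"
      by auto
    then obtain u w where uw: "ends e = {u, w}"
      using mg ES(1) unfolding multigraph_def by (meson card_2_iff subsetD)
    have card_less: "card F < card ES" if "F \<subseteq> ES - {e}" for F
      using that e ES(2) by (meson card_Diff1_less card_mono finite_Diff le_less_trans)
    have sub_Diff: "subgraph VS (ES - {e}) V E ends"
      using less(2) unfolding subgraph_def by auto
    show ?thesis
    proof (cases "(u, w) \<in> (adj (ES - {e}) ends)\<^sup>*")
      case True
      have "connected_graph VS (ES - {e}) ends"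
        using connected_graph_Diff_edge[OF less(3) uw _ True] ES(3) e uw by auto
      then obtain ys where ys: "ys \<noteq> []" "hd ys = r" "last ys = r" "set ys = VS"
        "walk_cost ?D ys \<le> ereal (2 * sum l (ES - {e}))"
        using less(1)[OF card_less sub_Diff _ less(4)] by blast
      moreover have "2 * sum l (ES - {e}) \<le> 2 * sum l ES"
        using e ES(1,2) nn by (auto simp: sum.remove)
      ultimately have "walk_cost ?D ys \<le> ereal (2 * sum l ES)"
        by (meson ereal_less_eq(3) order.trans)
      then show ?thesis
        using ys by blast
    next
      case False
      obtain V1 E1 V2 E2 x y where
        S1: "subgraph V1 E1 VS (ES - {e}) ends" "connected_graph V1 E1 ends" and
        S2: "subgraph V2 E2 VS (ES - {e}) ends" "connected_graph V2 E2 ends" and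
        split: "E1 \<inter> E2 = {}" "V1 \<union> V2 = VS" "r \<in> V1" "x \<in> V1" "y \<in> V2" "ends e = {x, y}"
        by (rule bridge_split[OF ES(3) less(3,4) e uw False])
      have E12: "E1 \<subseteq> ES - {e}" "E2 \<subseteq> ES - {e}"
        using S1(1) S2(1) unfolding subgraph_def by auto
      obtain ys1 where ys1: "ys1 \<noteq> []" "hd ys1 = r" "last ys1 = r" "set ys1 = V1"
        "walk_cost ?D ys1 \<le> ereal (2 * sum l E1)"
        using less(1)[OF card_less[OF E12(1)] subgraph_trans[OF S1(1) sub_Diff] S1(2) split(3)] by blast
      obtain ys2 where ys2: "ys2 \<noteq> []" "hd ys2 = y" "last ys2 = y" "set ys2 = V2"
        "walk_cost ?D ys2 \<le> ereal (2 * sum l E2)"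
        using less(1)[OF card_less[OF E12(2)] subgraph_trans[OF S2(1) sub_Diff] S2(2) split(5)] by blast
      obtain ys where ys: "hd ys = r" "last ys = r" "set ys = VS"
        "walk_cost ?D ys = walk_cost ?D ys1 + walk_cost ?D ys2 + ?D x y + ?D y x"
        using walk_cost_splice[of x ys1 ys2 y ?D] ys1 ys2 split by auto
      have "e \<in> E" "ends e \<subseteq> V"
        using ES(1,3) e less(2) unfolding subgraph_def by blast+
      then have "?D x y \<le> ereal (l e)" "?D y x \<le> ereal (l e)"
        using pair_dist_le_edge split(6) by (metis insert_commute)+
      then have "walk_cost ?D ys \<le> ereal (2 * sum l E1) + ereal (2 * sum l E2) + ereal (l e) + ereal (l e)"
        unfolding ys(4) using ys1(5) ys2(5) by (intro add_mono)
      also have "\<dots> \<le> ereal (2 * sum l ES)"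
        using sum_disjoint_subsets_le[OF ES(2) e E12 split(1), of l] nn ES(1) by force
      finally have "walk_cost ?D ys \<le> ereal (2 * sum l ES)" .
      moreover have "ys \<noteq> []"
        using ys(3) split(2,3) by auto
      ultimately show ?thesis
        using ys(1-3) by blast
    qed
  qed
qed

section \<open>Steiner distance in trees\<close>

lemma rtrancl_distinct_path:
  assumes "(u, w) \<in> R\<^sup>*"
  shows "\<exists>vs. vs \<noteq> [] \<and> hd vs = u \<and> last vs = w \<and> distinct vs \<and>
           successively (\<lambda>x y. (x, y) \<in> R) vs \<and> set vs \<subseteq> insert u (Range R)"
  using assms
proof (induction rule: rtrancl_induct)
  case base
  then show ?case by (intro exI[of _ "[u]"]) auto
next
  case (step y z)
  then obtain vs where vs: "vs \<noteq> []" "hd vs = u" "last vs = y" "distinct vs"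
    "successively (\<lambda>x y. (x, y) \<in> R) vs" "set vs \<subseteq> insert u (Range R)"
    by blast
  show ?case
  proof (cases "z \<in> set vs")
    case True
    then obtain p q where pq: "vs = p @ z # q"
      by (meson split_list)
    have "successively (\<lambda>x y. (x, y) \<in> R) (p @ [z])"
      using vs(5) unfolding pq by (auto simp: successively_append_iff successively_Cons)
    moreover have "hd (p @ [z]) = u"
      using vs(2) pq by (cases p) auto
    moreover have "distinct (p @ [z])" "set (p @ [z]) \<subseteq> insert u (Range R)"
      using vs(4,6) unfolding pq by auto
    ultimately show ?thesis
      by (intro exI[of _ "p @ [z]"]) simp
  next
    case False
    have "successively (\<lambda>x y. (x, y) \<in> R) (vs @ [z])"
      using vs(1,3,5) step(2) by (auto simp: successively_append_iff)
    moreover have "hd (vs @ [z]) = u" "distinct (vs @ [z])" "set (vs @ [z]) \<subseteq> insert u (Range R)"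
      using vs(1,2,4,6) False step(2) by auto
    ultimately show ?thesis
      by (intro exI[of _ "vs @ [z]"]) simp
  qed
qed

lemma has_cycle_path_edge:
  assumes vs: "distinct vs" "2 \<le> length vs" "set vs \<subseteq> V" "successively (\<lambda>x y. (x, y) \<in> adj F ends) vs"
    and F: "F \<subseteq> E" and e: "e \<in> E" "e \<notin> F" "ends e = {last vs, hd vs}"
  shows "has_cycle V E ends"
proof -
  define k where "k = length vs"
  define g where "g i = (SOME f. f \<in> F \<and> ends f = {vs ! i, vs ! Suc i})" for i
  have g: "g i \<in> F \<and> ends (g i) = {vs ! i, vs ! Suc i}" if "Suc i < k" for i
  proof -
    have "(vs ! i, vs ! Suc i) \<in> adj F ends"
      using successively_nth[OF vs(4)] that unfolding k_def by blast
    then have "\<exists>f. f \<in> F \<and> ends f = {vs ! i, vs ! Suc i}"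
      unfolding adj_def by auto
    then show ?thesis
      unfolding g_def by (rule someI_ex)
  qed
  define es where "es = map g [0..<k - 1] @ [e]"
  have es_nth: "es ! i = (if i < k - 1 then g i else e)" if "i < k" for i
    unfolding es_def using that vs(2) k_def by (auto simp: nth_append)
  have "inj_on g {0..<k - 1}"
  proof (rule inj_onI)
    fix i j
    assume ij: "i \<in> {0..<k - 1}" "j \<in> {0..<k - 1}" "g i = g j"
    then have "{vs ! i, vs ! Suc i} = {vs ! j, vs ! Suc j}"
      using g[of i] g[of j] by auto
    then have "vs ! i = vs ! j \<or> vs ! Suc i = vs ! j \<and> vs ! i = vs ! Suc j"
      by (auto simp: doubleton_eq_iff)
    moreover have "i < length vs" "Suc i < length vs" "j < length vs" "Suc j < length vs"
      using ij(1,2) unfolding k_def by auto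
    ultimately show "i = j"
      using vs(1) by (auto simp: nth_eq_iff_index_eq)
  qed
  moreover have "e \<notin> g ` {0..<k - 1}"
    using g e(2) by fastforce
  ultimately have "distinct es"
    unfolding es_def by (simp add: distinct_map)
  moreover have "ends (es ! i) = {vs ! i, vs ! ((i + 1) mod k)}" if "i < k" for i
  proof (cases "i < k - 1")
    case True
    then show ?thesis
      using es_nth[OF that] g[of i] by auto
  next
    case False
    then have "i = k - 1" "i + 1 = k"
      using that by auto
    moreover have "last vs = vs ! (k - 1)" "hd vs = vs ! 0"
      using vs(2) unfolding k_def by (simp_all add: hd_conv_nth last_conv_nth flip: length_greater_0_conv)
    ultimately show ?thesis
      using es_nth[OF that] False e(3) by (simp add: insert_commute)
  qed
  moreover have "length es = k" "set es \<subseteq> E"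
    using g vs(2) e(1) F unfolding es_def k_def by auto
  ultimately show ?thesis
    using vs(1-3) unfolding has_cycle_def k_def by (intro exI[of _ vs] exI[of _ es]) auto
qed

lemma tree_edge_bridge:
  assumes tree: "is_tree VT ET ends" and ends: "\<forall>f\<in>ET. ends f \<subseteq> VT"
    and e: "e \<in> ET" "ends e = {u, w}" "u \<noteq> w"
  shows "(u, w) \<notin> (adj (ET - {e}) ends)\<^sup>*"
proof
  assume "(u, w) \<in> (adj (ET - {e}) ends)\<^sup>*"
  then obtain vs where vs: "vs \<noteq> []" "hd vs = u" "last vs = w" "distinct vs"
    "successively (\<lambda>x y. (x, y) \<in> adj (ET - {e}) ends) vs"
    "set vs \<subseteq> insert u (Range (adj (ET - {e}) ends))"
    using rtrancl_distinct_path[of u w "adj (ET - {e}) ends"] by blast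
  have len: "2 \<le> length vs"
  proof (rule ccontr)
    assume "\<not> 2 \<le> length vs"
    then have "length vs = 1"
      using vs(1) by (cases vs) (auto simp: Suc_le_eq)
    then show False
      using vs(2,3) e(3) by (cases vs) auto
  qed
  have "Range (adj (ET - {e}) ends) \<subseteq> VT" "u \<in> VT"
    using ends e(1,2) unfolding adj_def by auto
  then have "set vs \<subseteq> VT"
    using vs(6) by blast
  moreover have "ends e = {last vs, hd vs}"
    using vs(2,3) e(2) by (simp add: insert_commute)
  ultimately have "has_cycle VT ET ends"
    using has_cycle_path_edge[OF vs(4) len _ vs(5), of VT ET e] e(1) by blast
  then show False
    using tree unfolding is_tree_def by blast
qed

lemma tree_remove_nonseparating_edge:
  assumes ends: "\<forall>f\<in>ET. ends f \<subseteq> VT \<and> card (ends f) = 2" and tree: "is_tree VT ET ends"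
    and S: "subgraph VS ES VT ET ends" "connected_graph VS ES ends" "A \<subseteq> VS" "A \<noteq> {}"
    and e: "e \<in> ES" "e \<notin> separating_edges ET ends A"
  obtains V1 E1 where "subgraph V1 E1 VT ET ends" "connected_graph V1 E1 ends" "A \<subseteq> V1"
    "E1 \<subseteq> ES - {e}"
proof -
  have eET: "e \<in> ET" and ES: "\<forall>f\<in>ES. ends f \<subseteq> VS \<and> ends f \<noteq> {}"
    using S(1) e(1) ends unfolding subgraph_def by force+
  obtain u w where uw: "ends e = {u, w}"
    using ends eET by (meson card_2_iff)
  obtain a0 where a0: "a0 \<in> A"
    using S(4) by blast
  have bridge_T: "(x, y) \<notin> (adj (ET - {e}) ends)\<^sup>*" if "ends e = {x, y}" for x y
  proof -
    have "x \<noteq> y"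
      using ends eET that by force
    then show ?thesis
      using tree_edge_bridge[OF tree _ eET that] ends by blast
  qed
  have ES_ET: "ES - {e} \<subseteq> ET - {e}"
    using S(1) unfolding subgraph_def by blast
  then have "(u, w) \<notin> (adj (ES - {e}) ends)\<^sup>*"
    using bridge_T[OF uw] adj_rtrancl_mono[of "ES - {e}" "ET - {e}" u w ends] by blast
  moreover have "a0 \<in> VS"
    using a0 S(3) by blast
  ultimately obtain V1 E1 V2 E2 x y where
      S1: "subgraph V1 E1 VS (ES - {e}) ends" "connected_graph V1 E1 ends"
    and S2: "subgraph V2 E2 VS (ES - {e}) ends" "connected_graph V2 E2 ends"
    and split: "E1 \<inter> E2 = {}" "V1 \<union> V2 = VS" "a0 \<in> V1" "x \<in> V1" "y \<in> V2" "ends e = {x, y}"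
    using bridge_split[OF ES S(2) _ e(1) uw] by metis
  have E12: "E1 \<subseteq> ET - {e}" "E2 \<subseteq> ET - {e}"
    using S1(1) S2(1) ES_ET unfolding subgraph_def by auto
  have "A \<subseteq> V1"
  proof
    fix b
    assume b: "b \<in> A"
    show "b \<in> V1"
    proof (rule ccontr)
      assume "b \<notin> V1"
      then have "b \<in> V2"
        using b S(3) split(2) by blast
      then have "(b, y) \<in> (adj (ET - {e}) ends)\<^sup>*"
        using S2(2) split(5) E12(2) adj_rtrancl_mono[of E2 "ET - {e}" b y ends]
        unfolding connected_graph_def by blast
      moreover have "(x, a0) \<in> (adj (ET - {e}) ends)\<^sup>*"
        using S1(2) split(3,4) E12(1) adj_rtrancl_mono[of E1 "ET - {e}" x a0 ends]
        unfolding connected_graph_def by blast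
      moreover have "(a0, b) \<in> (adj (ET - {e}) ends)\<^sup>*"
        using e(2) eET a0 b unfolding separating_edges_def by blast
      ultimately have "(x, y) \<in> (adj (ET - {e}) ends)\<^sup>*"
        by (meson rtrancl_trans)
      then show False
        using bridge_T[OF split(6)] by contradiction
    qed
  qed
  moreover have "subgraph V1 E1 VT ET ends"
    using S1(1) S(1) unfolding subgraph_def by auto
  moreover have "E1 \<subseteq> ES - {e}"
    using S1(1) unfolding subgraph_def by blast
  ultimately show thesis
    using that S1(2) by blast
qed

lemma tree_steiner_dist_le_separating_edges:
  assumes fin: "finite ET" and ends: "\<forall>f\<in>ET. ends f \<subseteq> VT \<and> card (ends f) = 2"
    and tree: "is_tree VT ET ends" and nn: "\<forall>e\<in>ET. 0 \<le> l e" and A: "A \<subseteq> VT" "A \<noteq> {}"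
  shows "steiner_dist VT ET ends l A \<le> ereal (sum l (separating_edges ET ends A))"
proof -
  define P where "P S \<longleftrightarrow> subgraph (fst S) (snd S) VT ET ends \<and> connected_graph (fst S) (snd S) ends
    \<and> A \<subseteq> fst S" for S
  have "P (VT, ET)"
    using ends tree A unfolding P_def subgraph_def is_tree_def by auto
  then obtain S0 where S0: "P S0" and min: "\<And>S. P S \<Longrightarrow> card (snd S0) \<le> card (snd S)"
    using ex_has_least_nat[of P "(VT, ET)" "\<lambda>S. card (snd S)"] by blast
  obtain VS ES where S: "S0 = (VS, ES)"
    by (cases S0)
  have S': "subgraph VS ES VT ET ends" "connected_graph VS ES ends" "A \<subseteq> VS"
    using S0 unfolding S P_def by auto
  have fin_ES: "finite ES"
    using S'(1) fin unfolding subgraph_def by (auto intro: finite_subset)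
  text \<open>A minimal connected subgraph containing \<open>A\<close> uses only edges separating \<open>A\<close>.\<close>
  have "ES \<subseteq> separating_edges ET ends A"
  proof
    fix e
    assume e: "e \<in> ES"
    show "e \<in> separating_edges ET ends A"
    proof (rule ccontr)
      assume "e \<notin> separating_edges ET ends A"
      then obtain V1 E1 where "subgraph V1 E1 VT ET ends" "connected_graph V1 E1 ends" "A \<subseteq> V1"
          "E1 \<subseteq> ES - {e}"
        by (rule tree_remove_nonseparating_edge[OF ends tree S' A(2) e])
      moreover have "card E1 < card ES"
        using \<open>E1 \<subseteq> ES - {e}\<close> e fin_ES by (meson card_Diff1_less card_mono finite_Diff le_less_trans)
      ultimately show False
        using min[of "(V1, E1)"] unfolding S P_def by simp
    qed
  qed
  then have "sum l ES \<le> sum l (separating_edges ET ends A)"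
    using fin nn unfolding separating_edges_def by (intro sum_mono2) auto
  moreover have "steiner_dist VT ET ends l A \<le> ereal (sum l ES)"
    using S' by (rule steiner_dist_le)
  ultimately show ?thesis
    by (meson ereal_less_eq(3) order.trans)
qed

fun crossings :: "('v \<Rightarrow> 'v \<Rightarrow> bool) \<Rightarrow> 'v list \<Rightarrow> nat" where
  "crossings S (a # b # xs) = (if S a b then 1 else 0) + crossings S (b # xs)"
| "crossings S _ = 0"

lemma crossings_eq_0_rtrancl:
  "crossings (\<lambda>a b. (a, b) \<notin> R\<^sup>*) ys = 0 \<Longrightarrow> x \<in> set ys \<Longrightarrow> (hd ys, x) \<in> R\<^sup>*"
proof (induction ys arbitrary: x rule: induct_list012)
  case (3 a b xs)
  then have "(a, b) \<in> R\<^sup>*" "crossings (\<lambda>a b. (a, b) \<notin> R\<^sup>*) (b # xs) = 0"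
    by (auto split: if_splits)
  moreover have "x = a \<or> x \<in> set (b # xs)"
    using "3.prems"(2) by auto
  ultimately show ?case
    using "3.IH"(2) by (metis list.sel(1) rtrancl.rtrancl_refl rtrancl_trans)
qed auto

lemma crossings_le_1_rtrancl:
  assumes "sym R"
  shows "crossings (\<lambda>a b. (a, b) \<notin> R\<^sup>*) ys \<le> 1 \<Longrightarrow> (hd ys, last ys) \<in> R\<^sup>* \<Longrightarrow> x \<in> set ys \<Longrightarrow>
    (hd ys, x) \<in> R\<^sup>*"
proof (induction ys arbitrary: x rule: induct_list012)
  case (3 a b xs)
  have sym: "(y, z) \<in> R\<^sup>*" if "(z, y) \<in> R\<^sup>*" for y z
    using symD[OF sym_rtrancl[OF assms]] that .
  have last: "(a, last (b # xs)) \<in> R\<^sup>*"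
    using "3.prems"(2) by simp
  show ?case
  proof (cases "(a, b) \<in> R\<^sup>*")
    case True
    have "(b, last (b # xs)) \<in> R\<^sup>*"
      using rtrancl_trans[OF sym[OF True] last] .
    moreover have "crossings (\<lambda>a b. (a, b) \<notin> R\<^sup>*) (b # xs) \<le> 1"
      using "3.prems"(1) True by simp
    moreover have "x = a \<or> x \<in> set (b # xs)"
      using "3.prems"(3) by auto
    ultimately show ?thesis
      using "3.IH"(2) True by (metis list.sel(1) rtrancl.rtrancl_refl rtrancl_trans)
  next
    case False
    then have "crossings (\<lambda>a b. (a, b) \<notin> R\<^sup>*) (b # xs) = 0"
      using "3.prems"(1) by simp
    then have "(b, last (b # xs)) \<in> R\<^sup>*"
      using crossings_eq_0_rtrancl[of R "b # xs" "last (b # xs)"] by simp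
    then have "(a, b) \<in> R\<^sup>*"
      using rtrancl_trans[OF last sym] by blast
    then show ?thesis
      using False by contradiction
  qed
qed auto

lemma closed_walk_crossings_ge_2:
  assumes "sym R" "hd ys = last ys" "a \<in> set ys" "b \<in> set ys" "(a, b) \<notin> R\<^sup>*"
  shows "2 \<le> crossings (\<lambda>a b. (a, b) \<notin> R\<^sup>*) ys"
proof (rule ccontr)
  assume "\<not> ?thesis"
  then have "(hd ys, x) \<in> R\<^sup>*" if "x \<in> set ys" for x
    using crossings_le_1_rtrancl[OF assms(1) _ _ that] assms(2) by simp
  then have "(a, hd ys) \<in> R\<^sup>*" "(hd ys, b) \<in> R\<^sup>*"
    using assms(3,4) symD[OF sym_rtrancl[OF assms(1)]] by blast+
  then show False
    using assms(5) rtrancl_trans by metis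
qed

lemma walk_cost_ge_weighted_crossings:
  assumes fin: "finite E" and nn: "\<forall>e\<in>E. 0 \<le> l e"
  shows "ereal (\<Sum>e\<in>E. l e * real (crossings (\<lambda>a b. (a, b) \<notin> (adj (E - {e}) ends)\<^sup>*) ys))
    \<le> walk_cost (pair_dist V E ends l) ys"
proof (induction ys rule: induct_list012)
  case (3 a b xs)
  let ?S = "\<lambda>e a b. (a, b) \<notin> (adj (E - {e}) ends)\<^sup>*"
  have "(\<Sum>e\<in>E. l e * (if ?S e a b then 1 else 0)) = sum l {e \<in> E. ?S e a b}"
    using fin by (simp add: sum.inter_filter[symmetric] if_distrib cong: if_cong)
  also have "\<dots> \<le> sum l (separating_edges E ends {a, b})"
    using fin nn unfolding separating_edges_def by (intro sum_mono2) auto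
  finally have "ereal (\<Sum>e\<in>E. l e * (if ?S e a b then 1 else 0)) \<le> pair_dist V E ends l a b"
    using steiner_dist_ge_separating_edges[OF fin nn, of ends "{a, b}" V] order.trans ereal_less_eq(3)
    by blast
  then have "ereal (\<Sum>e\<in>E. l e * (if ?S e a b then 1 else 0))
      + ereal (\<Sum>e\<in>E. l e * real (crossings (?S e) (b # xs)))
      \<le> pair_dist V E ends l a b + walk_cost (pair_dist V E ends l) (b # xs)"
    using "3.IH"(2) by (rule add_mono)
  moreover have "(\<Sum>e\<in>E. l e * real (crossings (?S e) (a # b # xs)))
      = (\<Sum>e\<in>E. l e * (if ?S e a b then 1 else 0)) + (\<Sum>e\<in>E. l e * real (crossings (?S e) (b # xs)))"
    by (auto simp: sum.distrib[symmetric] distrib_left intro!: sum.cong)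
  ultimately show ?case
    by simp
qed auto

lemma tree_closed_walk_cost_ge:
  assumes fin: "finite ET" and ends: "\<forall>f\<in>ET. ends f \<subseteq> VT \<and> card (ends f) = 2"
    and tree: "is_tree VT ET ends" and nn: "\<forall>e\<in>ET. 0 \<le> l e" and A: "A \<subseteq> VT" "A \<noteq> {}"
    and ys: "hd ys = last ys" "A \<subseteq> set ys"
  shows "2 * steiner_dist VT ET ends l A \<le> walk_cost (pair_dist VT ET ends l) ys"
proof -
  let ?S = "\<lambda>e a b. (a, b) \<notin> (adj (ET - {e}) ends)\<^sup>*"
  let ?Sep = "separating_edges ET ends A"
  have "2 * sum l ?Sep = (\<Sum>e\<in>?Sep. l e * 2)"
    by (simp add: sum_distrib_left mult.commute)
  also have "\<dots> \<le> (\<Sum>e\<in>?Sep. l e * real (crossings (?S e) ys))"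
  proof (rule sum_mono)
    fix e
    assume e: "e \<in> ?Sep"
    then obtain a b where "a \<in> A" "b \<in> A" "?S e a b"
      unfolding separating_edges_def by blast
    then have "2 \<le> crossings (?S e) ys"
      using closed_walk_crossings_ge_2[OF sym_adj ys(1)] ys(2) by blast
    moreover have "0 \<le> l e"
      using nn e unfolding separating_edges_def by blast
    ultimately show "l e * 2 \<le> l e * real (crossings (?S e) ys)"
      by (simp add: mult_left_mono)
  qed
  also have "\<dots> \<le> (\<Sum>e\<in>ET. l e * real (crossings (?S e) ys))"
    using fin nn unfolding separating_edges_def by (intro sum_mono2) auto
  finally have crossing_bound: "2 * sum l ?Sep \<le> (\<Sum>e\<in>ET. l e * real (crossings (?S e) ys))" .
  have "2 * steiner_dist VT ET ends l A \<le> 2 * ereal (sum l ?Sep)"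
    using tree_steiner_dist_le_separating_edges[OF fin ends tree nn A] by (rule ereal_mult_left_mono) simp
  also have "\<dots> \<le> ereal (\<Sum>e\<in>ET. l e * real (crossings (?S e) ys))"
    using crossing_bound by simp
  also have "\<dots> \<le> walk_cost (pair_dist VT ET ends l) ys"
    by (rule walk_cost_ge_weighted_crossings[OF fin nn])
  finally show ?thesis .
qed

lemma tree_steiner_dist_le_connected_subgraph:
  assumes mg: "multigraph V E ends" and nn: "\<forall>e\<in>E. 0 \<le> l e"
    and T: "subgraph VT ET V E ends" "is_tree VT ET ends"
    and geo: "\<And>a b. a \<in> VT \<Longrightarrow> b \<in> VT \<Longrightarrow> pair_dist VT ET ends l a b = pair_dist V E ends l a b"
    and S: "subgraph VS ES V E ends" "connected_graph VS ES ends" and A: "A \<subseteq> VT" "A \<subseteq> VS"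
  shows "steiner_dist VT ET ends l A \<le> ereal (sum l ES)"
proof (cases "A = {}")
  case True
  obtain v where "v \<in> VT"
    using T(2) unfolding is_tree_def connected_graph_def by blast
  then have "subgraph {v} {} VT ET ends"
    unfolding subgraph_def by blast
  then have "steiner_dist VT ET ends l A \<le> ereal (sum l {})"
    by (rule steiner_dist_le[OF _ connected_graph_singleton]) (simp add: True)
  also have "\<dots> \<le> ereal (sum l ES)"
    using S(1) nn unfolding subgraph_def by (auto intro: sum_nonneg)
  finally show ?thesis .
next
  case False
  then obtain r where r: "r \<in> A"
    by blast
  have fin: "finite V" "finite E" "finite ET" and ends: "\<forall>f\<in>ET. ends f \<subseteq> VT \<and> card (ends f) = 2"
    and nn_T: "\<forall>e\<in>ET. 0 \<le> l e"
    using mg T(1) nn unfolding multigraph_def subgraph_def by (auto intro: finite_subset)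
  obtain ys where ys: "ys \<noteq> []" "hd ys = r" "last ys = r" "set ys = VS"
    "walk_cost (pair_dist V E ends l) ys \<le> ereal (2 * sum l ES)"
    using connected_subgraph_closed_walk[OF mg nn S] r A(2) by blast
  then obtain t where t: "ys = r # t"
    by (cases ys) auto
  define zs where "zs = filter (\<lambda>x. x \<in> VT) ys"
  have "hd zs = last zs"
    using last_filter[OF ys(1), of "\<lambda>x. x \<in> VT"] r A(1) ys(3) unfolding zs_def t by auto
  moreover have "A \<subseteq> set zs"
    using A ys(4) unfolding zs_def by auto
  ultimately have "2 * steiner_dist VT ET ends l A \<le> walk_cost (pair_dist VT ET ends l) zs"
    using tree_closed_walk_cost_ge[OF fin(3) ends T(2) nn_T A(1) False] by blast
  also have "\<dots> = walk_cost (pair_dist V E ends l) zs"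
    using geo unfolding zs_def by (intro walk_cost_cong) auto
  also have "\<dots> \<le> walk_cost (pair_dist V E ends l) ys"
    using walk_cost_filter_le[OF steiner_dist_triangle[OF fin(1,2) nn], of "\<lambda>x. x \<in> VT" r t]
      r A(1) ys(3) unfolding zs_def t by auto
  also have "\<dots> \<le> 2 * ereal (sum l ES)"
    using ys(5) by simp
  finally show ?thesis
    using ereal_mult_le_mult_iff[of 2 "steiner_dist VT ET ends l A" "ereal (sum l ES)"] by simp
qed

theorem theorem1:
  fixes V VT :: "'v set" and E ET :: "'e set" and ends :: "'e \<Rightarrow> 'v set" and l :: "'e \<Rightarrow> real"
  assumes "multigraph V E ends"
    and "length_function E l"
    and "subgraph VT ET V E ends"
    and "is_tree VT ET ends"
    and "k_geodesic 2 VT ET V E ends l"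
  shows "fully_geodesic VT ET V E ends l"
proof -
  have nn: "\<forall>e\<in>E. 0 \<le> l e"
    using assms(2) unfolding length_function_def by (simp add: less_imp_le)
  have geo: "pair_dist VT ET ends l a b = pair_dist V E ends l a b" if "a \<in> VT" "b \<in> VT" for a b
    using assms(5) that unfolding k_geodesic_def by (cases "a = b") auto
  have "steiner_dist VT ET ends l A = steiner_dist V E ends l A" if "A \<subseteq> VT" for A
  proof (rule antisym)
    show "steiner_dist VT ET ends l A \<le> steiner_dist V E ends l A"
      using tree_steiner_dist_le_connected_subgraph[OF assms(1) nn assms(3,4) geo _ _ that]
      by (intro steiner_dist_greatest) blast
    show "steiner_dist V E ends l A \<le> steiner_dist VT ET ends l A"
      using assms(3) by (rule steiner_dist_subgraph)
  qed
  then show ?thesis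
    unfolding fully_geodesic_def k_geodesic_def by blast
qed

end
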